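(* For any $m$, $n\le m$ and $0<\rho<n$, there exists a code over $\mathrm{GF}(q^m)$ of length $n$ and rank covering radius $\rho$ whose cardinality gives $$K_{\mathrm R}(q^m,n,\rho)\le\left\lfloor\frac{1}{1-\log_{q^{mn}}\left(q^{mn}-V_\rho(q^m,n)\right)}\right\rfloor+1.$$
   Context: The rank $\mathrm{rk}(\mathbf x)$ of $\mathbf x\in\mathrm{GF}(q^m)^n$ is the maximum number of its coordinates linearly independent over $\mathrm{GF}(q)$, and $d_{\mathrm R}(\mathbf x,\mathbf y)=\mathrm{rk}(\mathbf x-\mathbf y)$. $K_{\mathrm R}(q^m,n,\rho)$ is the minimum cardinality of a code in $\mathrm{GF}(q^m)^n$ with rank covering radius $\rho$ (covering radius $=\max_{\mathbf x}\min_{\mathbf c\in C}d_{\mathrm R}(\mathbf x,\mathbf c)$). $V_\rho(q^m,n)=\sum_{u=0}^\rho{n\brack u}\alpha(m,u)$ with $\alpha(m,0)=1$, $\alpha(m,u)=\prod_{i=0}^{u-1}(q^m-q^i)$, ${n\brack u}=\alpha(n,u)/\alpha(u,u)$. *)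

theory Defs
  imports Complex_Main
begin

text \<open>The extension field GF(q^m) is a finite field type 'a; GF(q) is a subfield K of it
  with card K = q and CARD('a) = q^m. Vectors of GF(q^m)^n are functions nat => 'a
  vanishing outside {..<n}.\<close>

definition is_subfield :: "'a::field set \<Rightarrow> bool" where
  "is_subfield K \<longleftrightarrow> 0 \<in> K \<and> 1 \<in> K \<and> (\<forall>x\<in>K. \<forall>y\<in>K. x + y \<in> K \<and> x * y \<in> K)
     \<and> (\<forall>x\<in>K. - x \<in> K) \<and> (\<forall>x\<in>K. x \<noteq> 0 \<longrightarrow> inverse x \<in> K)"

definition vec_space :: "nat \<Rightarrow> (nat \<Rightarrow> 'a::zero) set" where
  "vec_space n = {x. \<forall>i\<ge>n. x i = 0}"

definition lin_indep_over :: "'a::field set \<Rightarrow> nat set \<Rightarrow> (nat \<Rightarrow> 'a) \<Rightarrow> bool" where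
  "lin_indep_over K I x \<longleftrightarrow>
     (\<forall>c. (\<forall>i\<in>I. c i \<in> K) \<longrightarrow> (\<Sum>i\<in>I. c i * x i) = 0 \<longrightarrow> (\<forall>i\<in>I. c i = 0))"

definition rk :: "'a::field set \<Rightarrow> nat \<Rightarrow> (nat \<Rightarrow> 'a) \<Rightarrow> nat" where
  "rk K n x = Max {card I | I. I \<subseteq> {..<n} \<and> lin_indep_over K I x}"

definition rank_dist :: "'a::field set \<Rightarrow> nat \<Rightarrow> (nat \<Rightarrow> 'a) \<Rightarrow> (nat \<Rightarrow> 'a) \<Rightarrow> nat" where
  "rank_dist K n x y = rk K n (x - y)"

definition is_code :: "nat \<Rightarrow> (nat \<Rightarrow> 'a::zero) set \<Rightarrow> bool" where
  "is_code n C \<longleftrightarrow> C \<subseteq> vec_space n \<and> C \<noteq> {}"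

definition cov_radius :: "'a::field set \<Rightarrow> nat \<Rightarrow> (nat \<Rightarrow> 'a) set \<Rightarrow> nat" where
  "cov_radius K n C = Max ((\<lambda>x. Min ((\<lambda>c. rank_dist K n x c) ` C)) ` vec_space n)"

definition K_R :: "'a::field set \<Rightarrow> nat \<Rightarrow> nat \<Rightarrow> nat" where
  "K_R K n \<rho> = (LEAST k. \<exists>C. is_code n C \<and> cov_radius K n C = \<rho> \<and> card C = k)"

definition alpha :: "nat \<Rightarrow> nat \<Rightarrow> nat \<Rightarrow> nat" where
  "alpha q m u = (\<Prod>i<u. q ^ m - q ^ i)"

definition gauss_binom :: "nat \<Rightarrow> nat \<Rightarrow> nat \<Rightarrow> nat" where
  "gauss_binom q n u = alpha q n u div alpha q u u"

definition V :: "nat \<Rightarrow> nat \<Rightarrow> nat \<Rightarrow> nat \<Rightarrow> nat" where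
  "V q m n \<rho> = (\<Sum>u\<le>\<rho>. gauss_binom q n u * alpha q m u)"

end

theory Submission
  imports Defs "HOL-Library.FuncSet"
begin

text \<open>
  Appending a coordinate a to a word x of GF(q^m)^n keeps the rank when a lies in the GF(q)-span
  of the coordinates of x, a set of q^(rk x) elements, and raises it by one otherwise. The
  resulting recursion for the number of words of each rank is the q-Pascal rule, so a rank ball
  of radius rho has exactly V = V_rho(q^m, n) elements, and V < N = q^(mn) because a word of
  full rank exists when n <= m.

  A k-tuple of words misses the ball around a fixed x in at most (N - V)^k ways, so by the union
  bound fewer than N^k tuples fail to cover everything as soon as N (N - V)^k < N^k, which holds
  for k = floor (1 / (1 - log_N (N - V))) + 1. Starting from such a covering, of radius at most
  rho, zero the entries of its words one at a time: each step moves the covering radius by at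
  most one, and the final code {0} has radius n > rho, so some intermediate code has radius
  exactly rho.
\<close>

lemma is_subfieldD:
  assumes "is_subfield K"
  shows subfield_zero: "0 \<in> K" and subfield_one: "1 \<in> K"
    and subfield_add: "x \<in> K \<Longrightarrow> y \<in> K \<Longrightarrow> x + y \<in> K"
    and subfield_mult: "x \<in> K \<Longrightarrow> y \<in> K \<Longrightarrow> x * y \<in> K"
    and subfield_uminus: "x \<in> K \<Longrightarrow> - x \<in> K"
  using assms unfolding is_subfield_def by simp_all

lemma subfield_inverse: "is_subfield K \<Longrightarrow> x \<in> K \<Longrightarrow> inverse x \<in> K"
  unfolding is_subfield_def by (cases "x = 0") simp_all

lemma subfield_diff: "is_subfield K \<Longrightarrow> x \<in> K \<Longrightarrow> y \<in> K \<Longrightarrow> x - y \<in> K"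
  by (metis subfield_add subfield_uminus diff_conv_add_uminus)

lemma subfield_divide: "is_subfield K \<Longrightarrow> x \<in> K \<Longrightarrow> y \<in> K \<Longrightarrow> x / y \<in> K"
  by (metis subfield_mult subfield_inverse divide_inverse)

lemma lin_indep_over_cong:
  "(\<And>i. i \<in> I \<Longrightarrow> x i = y i) \<Longrightarrow> lin_indep_over K I x = lin_indep_over K I y"
  unfolding lin_indep_over_def by (simp cong: sum.cong)

lemma lin_indep_over_subset:
  assumes "lin_indep_over K I x" "J \<subseteq> I" "finite I" "0 \<in> K"
  shows "lin_indep_over K J x"
  unfolding lin_indep_over_def
proof (intro allI impI ballI)
  fix c i assume c: "\<forall>i\<in>J. c i \<in> K" and "(\<Sum>i\<in>J. c i * x i) = 0" and "i \<in> J"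
  define c' where "c' i = (if i \<in> J then c i else 0)" for i
  have "(\<Sum>i\<in>I. c' i * x i) = (\<Sum>i\<in>J. c' i * x i)"
    using assms(2,3) by (intro sum.mono_neutral_right) (auto simp: c'_def)
  also have "\<dots> = (\<Sum>i\<in>J. c i * x i)" by (simp add: c'_def)
  finally have "(\<Sum>i\<in>I. c' i * x i) = 0"
    using \<open>(\<Sum>i\<in>J. c i * x i) = 0\<close> by simp
  moreover have "\<forall>i\<in>I. c' i \<in> K" using c assms(4) by (simp add: c'_def)
  moreover have "i \<in> I" using \<open>i \<in> J\<close> assms(2) by blast
  ultimately have "c' i = 0"
    using assms(1)[unfolded lin_indep_over_def, rule_format, of c' i] by blast
  then show "c i = 0" using \<open>i \<in> J\<close> by (simp add: c'_def)
qed

definition span_over :: "'a::field set \<Rightarrow> nat set \<Rightarrow> (nat \<Rightarrow> 'a) \<Rightarrow> 'a set" where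
  "span_over K I x = {\<Sum>i\<in>I. c i * x i | c. \<forall>i\<in>I. c i \<in> K}"

lemma span_overI: "\<forall>i\<in>I. c i \<in> K \<Longrightarrow> (\<Sum>i\<in>I. c i * x i) \<in> span_over K I x"
  unfolding span_over_def by blast

lemma span_over_cong: "(\<And>i. i \<in> I \<Longrightarrow> x i = y i) \<Longrightarrow> span_over K I x = span_over K I y"
  unfolding span_over_def by (simp cong: sum.cong)

lemma finite_rk_candidates: "finite {card I | I. I \<subseteq> {..<n} \<and> lin_indep_over K I x}"
proof -
  have "{card I | I. I \<subseteq> {..<n} \<and> lin_indep_over K I x} \<subseteq> card ` Pow {..<n}" by auto
  then show ?thesis by (rule finite_subset) simp
qed

lemma card_le_rk: "I \<subseteq> {..<n} \<Longrightarrow> lin_indep_over K I x \<Longrightarrow> card I \<le> rk K n x"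
  unfolding rk_def by (rule Max_ge[OF finite_rk_candidates]) blast

lemma rk_witness:
  obtains I where "I \<subseteq> {..<n}" "lin_indep_over K I x" "card I = rk K n x"
proof -
  have "lin_indep_over K {} x" unfolding lin_indep_over_def by simp
  then have "card {} \<in> {card I | I. I \<subseteq> {..<n} \<and> lin_indep_over K I x}"
    by (intro CollectI exI[of _ "{}"]) simp
  then have "rk K n x \<in> {card I | I. I \<subseteq> {..<n} \<and> lin_indep_over K I x}"
    unfolding rk_def by (intro Max_in[OF finite_rk_candidates]) (rule ex_in_conv[THEN iffD1], rule exI)
  then obtain I where "rk K n x = card I \<and> I \<subseteq> {..<n} \<and> lin_indep_over K I x"
    unfolding mem_Collect_eq by (elim exE)
  then show ?thesis using that by (elim conjE) simp
qed

lemma rk_le: "rk K n x \<le> n"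
proof -
  obtain I where "I \<subseteq> {..<n}" "card I = rk K n x" by (rule rk_witness)
  then show ?thesis using card_mono[of "{..<n}" I] by simp
qed

lemma rk_le_rk_fun_upd: "rk K n x \<le> rk K (Suc n) (x(n := a))"
proof -
  obtain I where I: "I \<subseteq> {..<n}" "lin_indep_over K I x" "card I = rk K n x"
    by (rule rk_witness)
  have "lin_indep_over K I (x(n := a)) = lin_indep_over K I x"
    using I(1) by (intro lin_indep_over_cong) auto
  with I(2) have "lin_indep_over K I (x(n := a))" by simp
  moreover have "I \<subseteq> {..<Suc n}" using I(1) by auto
  ultimately show ?thesis using I(3) card_le_rk[of I "Suc n" K "x(n := a)"] by simp
qed

context
  fixes K :: "'a::field set"
  assumes K: "is_subfield K"
begin

lemma span_over_add:
  assumes "u \<in> span_over K I x" "v \<in> span_over K I x"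
  shows "u + v \<in> span_over K I x"
proof -
  obtain c d where "\<forall>i\<in>I. c i \<in> K" "\<forall>i\<in>I. d i \<in> K"
    and "u = (\<Sum>i\<in>I. c i * x i)" "v = (\<Sum>i\<in>I. d i * x i)"
    using assms unfolding span_over_def by blast
  then have "u + v = (\<Sum>i\<in>I. (c i + d i) * x i)"
    by (simp add: sum.distrib distrib_right)
  also have "\<dots> \<in> span_over K I x"
    using \<open>\<forall>i\<in>I. c i \<in> K\<close> \<open>\<forall>i\<in>I. d i \<in> K\<close> subfield_add[OF K]
    by (intro span_overI) blast
  finally show ?thesis .
qed

lemma span_over_sum:
  "finite A \<Longrightarrow> (\<And>a. a \<in> A \<Longrightarrow> g a \<in> span_over K I x) \<Longrightarrow> sum g A \<in> span_over K I x"
proof (induction A rule: finite_induct)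
  case empty
  show ?case using span_overI[of I "\<lambda>_. 0" K x] subfield_zero[OF K] by simp
next
  case (insert a A)
  then have "g a + sum g A \<in> span_over K I x" by (intro span_over_add) auto
  then show ?case using insert.hyps by simp
qed

lemma span_over_mult:
  assumes "k \<in> K" "u \<in> span_over K I x"
  shows "k * u \<in> span_over K I x"
proof -
  obtain c where "\<forall>i\<in>I. c i \<in> K" "u = (\<Sum>i\<in>I. c i * x i)"
    using assms(2) unfolding span_over_def by blast
  then have "k * u = (\<Sum>i\<in>I. (k * c i) * x i)"
    by (simp add: sum_distrib_left mult.assoc)
  also have "\<dots> \<in> span_over K I x"
    using \<open>\<forall>i\<in>I. c i \<in> K\<close> subfield_mult[OF K assms(1)] by (intro span_overI) blast
  finally show ?thesis .
qed

lemma span_over_coordinate: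
  assumes "i \<in> I" "finite I"
  shows "x i \<in> span_over K I x"
proof -
  have "(\<Sum>k\<in>I. (if k = i then 1 else 0) * x k) \<in> span_over K I x"
    using subfield_zero[OF K] subfield_one[OF K] by (intro span_overI) auto
  also have "(\<Sum>k\<in>I. (if k = i then 1 else 0) * x k) = (\<Sum>k\<in>I. if k = i then x k else 0)"
    by (rule sum.cong) simp_all
  also have "\<dots> = x i"
    using assms by simp
  finally show ?thesis .
qed

lemma span_over_subset:
  assumes "finite J" "\<And>j. j \<in> J \<Longrightarrow> y j \<in> span_over K I x"
  shows "span_over K J y \<subseteq> span_over K I x"
proof
  fix u assume "u \<in> span_over K J y"
  then obtain c where "\<forall>j\<in>J. c j \<in> K" "u = (\<Sum>j\<in>J. c j * y j)"
    unfolding span_over_def by blast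
  have "c j * y j \<in> span_over K I x" if "j \<in> J" for j
    using that \<open>\<forall>j\<in>J. c j \<in> K\<close> assms(2) by (intro span_over_mult) simp_all
  then show "u \<in> span_over K I x"
    unfolding \<open>u = (\<Sum>j\<in>J. c j * y j)\<close> by (rule span_over_sum[OF assms(1)])
qed

lemma card_span_over:
  assumes "finite I" "lin_indep_over K I x"
  shows "card (span_over K I x) = card K ^ card I"
proof -
  let ?f = "\<lambda>c. \<Sum>i\<in>I. c i * x i"
  have span_eq: "span_over K I x = ?f ` (PiE I (\<lambda>_. K))"
  proof (rule set_eqI)
    fix u
    have "(\<exists>c. u = ?f c \<and> (\<forall>i\<in>I. c i \<in> K)) \<longleftrightarrow> (\<exists>c\<in>PiE I (\<lambda>_. K). u = ?f c)"
    proof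
      assume "\<exists>c. u = ?f c \<and> (\<forall>i\<in>I. c i \<in> K)"
      then obtain c where "u = ?f c" "\<forall>i\<in>I. c i \<in> K" by blast
      then show "\<exists>c\<in>PiE I (\<lambda>_. K). u = ?f c" by (intro bexI[of _ "restrict c I"]) simp_all
    next
      assume "\<exists>c\<in>PiE I (\<lambda>_. K). u = ?f c"
      then show "\<exists>c. u = ?f c \<and> (\<forall>i\<in>I. c i \<in> K)" by (auto simp: PiE_iff)
    qed
    then show "u \<in> span_over K I x \<longleftrightarrow> u \<in> ?f ` (PiE I (\<lambda>_. K))"
      unfolding span_over_def by blast
  qed
  have "inj_on ?f (PiE I (\<lambda>_. K))"
  proof (rule inj_onI)
    fix c d assume c: "c \<in> PiE I (\<lambda>_. K)" and d: "d \<in> PiE I (\<lambda>_. K)" and "?f c = ?f d"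
    then have "(\<Sum>i\<in>I. (c i - d i) * x i) = 0"
      by (simp add: sum_subtractf left_diff_distrib)
    moreover have "\<forall>i\<in>I. c i - d i \<in> K" using c d subfield_diff[OF K] by (simp add: PiE_iff)
    ultimately have "\<forall>i\<in>I. c i - d i = 0"
      using assms(2)[unfolded lin_indep_over_def, rule_format, of "\<lambda>i. c i - d i"] by blast
    then show "c = d" using c d by (intro PiE_ext[OF c d]) simp
  qed
  then have "card (span_over K I x) = card (PiE I (\<lambda>_. K))" by (simp add: span_eq card_image)
  then show ?thesis using assms(1) by (simp add: card_PiE)
qed

lemma lin_indep_over_insert:
  assumes "finite I" "lin_indep_over K I x" "j \<notin> I" "x j \<notin> span_over K I x"
  shows "lin_indep_over K (insert j I) x"
  unfolding lin_indep_over_def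
proof (intro allI impI)
  fix c assume c: "\<forall>i\<in>insert j I. c i \<in> K" and "(\<Sum>i\<in>insert j I. c i * x i) = 0"
  then have sum_I: "(\<Sum>i\<in>I. c i * x i) = - (c j * x j)"
    using assms(1,3) by (simp add: eq_neg_iff_add_eq_0 add.commute)
  have "c j = 0"
  proof (rule ccontr)
    assume "c j \<noteq> 0"
    then have "x j = - (\<Sum>i\<in>I. c i * x i) / c j" by (simp add: sum_I)
    also have "\<dots> = (\<Sum>i\<in>I. (- c i / c j) * x i)"
      by (simp add: sum_divide_distrib sum_negf[symmetric])
    also have "\<dots> \<in> span_over K I x"
      using c subfield_divide[OF K] subfield_uminus[OF K] by (intro span_overI) simp
    finally show False using assms(4) by contradiction
  qed
  then have "(\<Sum>i\<in>I. c i * x i) = 0" using sum_I by simp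
  then have "\<forall>i\<in>I. c i = 0"
    using assms(2)[unfolded lin_indep_over_def, rule_format, of c] c by blast
  with \<open>c j = 0\<close> show "\<forall>i\<in>insert j I. c i = 0" by simp
qed

lemma rk_le_Suc_rk:
  assumes "{..<n'} - {j} \<subseteq> {..<n}" and "\<And>i. i \<noteq> j \<Longrightarrow> y i = x i"
  shows "rk K n' y \<le> Suc (rk K n x)"
proof -
  obtain J where J: "J \<subseteq> {..<n'}" "lin_indep_over K J y" "card J = rk K n' y"
    by (rule rk_witness)
  have "finite J" using J(1) finite_subset by blast
  have "lin_indep_over K (J - {j}) y"
    using lin_indep_over_subset[OF J(2) _ \<open>finite J\<close> subfield_zero[OF K]] by blast
  then have "lin_indep_over K (J - {j}) x"
    using assms(2) lin_indep_over_cong[of "J - {j}" y x K] by simp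
  then have "card (J - {j}) \<le> rk K n x"
    using J(1) assms(1) by (intro card_le_rk) blast
  moreover have "card J \<le> Suc (card (J - {j}))"
    using \<open>finite J\<close> by (cases "j \<in> J") (simp_all add: card_Suc_Diff1)
  ultimately show ?thesis using J(3) by simp
qed

lemma span_over_rk_witness:
  assumes I: "I \<subseteq> {..<n}" "lin_indep_over K I x" "card I = rk K n x"
  shows "span_over K {..<n} x = span_over K I x"
proof
  have "finite I" using I(1) finite_subset by blast
  have "x j \<in> span_over K I x" if "j < n" for j
  proof (rule ccontr)
    assume "x j \<notin> span_over K I x"
    moreover from this have "j \<notin> I" using span_over_coordinate[OF _ \<open>finite I\<close>] by blast
    ultimately have "lin_indep_over K (insert j I) x"
      using lin_indep_over_insert[OF \<open>finite I\<close> I(2)] by blast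
    then have "card (insert j I) \<le> rk K n x" using I(1) \<open>j < n\<close> by (intro card_le_rk) auto
    then show False using I(3) \<open>j \<notin> I\<close> \<open>finite I\<close> by simp
  qed
  then show "span_over K {..<n} x \<subseteq> span_over K I x"
    by (intro span_over_subset) auto
  show "span_over K I x \<subseteq> span_over K {..<n} x"
    using I(1) \<open>finite I\<close> by (intro span_over_subset span_over_coordinate) auto
qed

lemma card_span_over_rk: "card (span_over K {..<n} x) = card K ^ rk K n x"
proof -
  obtain I where I: "I \<subseteq> {..<n}" "lin_indep_over K I x" "card I = rk K n x"
    by (rule rk_witness)
  then have "finite I" using finite_subset by blast
  then show ?thesis
    using span_over_rk_witness[OF I] card_span_over[OF _ I(2)] I(3) by simp
qed

lemma subfield_card_ge_2:
  assumes "finite K"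
  shows "2 \<le> card K"
proof -
  have "{0, 1} \<subseteq> K" using subfield_zero[OF K] subfield_one[OF K] by blast
  then have "card {0, 1 :: 'a} \<le> card K" by (rule card_mono[OF assms])
  then show ?thesis by simp
qed

lemma rk_fun_upd_le_rk_if_in_span:
  assumes "finite K" and "a \<in> span_over K {..<n} x"
  shows "rk K (Suc n) (x(n := a)) \<le> rk K n x"
proof -
  obtain J where J: "J \<subseteq> {..<Suc n}" "lin_indep_over K J (x(n := a))"
    "card J = rk K (Suc n) (x(n := a))"
    by (rule rk_witness)
  have "finite J" using J(1) finite_subset by blast
  have "(x(n := a)) j \<in> span_over K {..<n} x" if "j \<in> J" for j
  proof (cases "j = n")
    case False
    then have "j \<in> {..<n}" using that J(1) by auto
    then show ?thesis using False span_over_coordinate[of j "{..<n}" x] by simp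
  qed (simp add: assms(2))
  then have "span_over K J (x(n := a)) \<subseteq> span_over K {..<n} x"
    by (rule span_over_subset[OF \<open>finite J\<close>])
  moreover have "0 < card (span_over K {..<n} x)"
    using card_span_over_rk subfield_card_ge_2[OF assms(1)] by simp
  ultimately have "card (span_over K J (x(n := a))) \<le> card (span_over K {..<n} x)"
    by (intro card_mono) (simp_all add: card_ge_0_finite)
  then have "card K ^ card J \<le> card K ^ rk K n x"
    by (simp add: card_span_over[OF \<open>finite J\<close> J(2)] card_span_over_rk)
  then show ?thesis
    using subfield_card_ge_2[OF assms(1)] J(3) by (simp add: power_le_imp_le_exp)
qed

lemma Suc_rk_le_rk_fun_upd_if_notin_span:
  assumes "a \<notin> span_over K {..<n} x"
  shows "Suc (rk K n x) \<le> rk K (Suc n) (x(n := a))"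
proof -
  obtain I where I: "I \<subseteq> {..<n}" "lin_indep_over K I x" "card I = rk K n x"
    by (rule rk_witness)
  have "finite I" "n \<notin> I" using I(1) finite_subset by auto
  have "lin_indep_over K I (x(n := a)) = lin_indep_over K I x"
    using \<open>n \<notin> I\<close> by (intro lin_indep_over_cong) auto
  with I(2) have I_upd: "lin_indep_over K I (x(n := a))" by simp
  have "span_over K I (x(n := a)) = span_over K I x"
    using \<open>n \<notin> I\<close> by (intro span_over_cong) auto
  then have "span_over K I (x(n := a)) = span_over K {..<n} x"
    using span_over_rk_witness[OF I] by simp
  then have "lin_indep_over K (insert n I) (x(n := a))"
    using assms lin_indep_over_insert[OF \<open>finite I\<close> I_upd \<open>n \<notin> I\<close>] by simp
  moreover have "insert n I \<subseteq> {..<Suc n}" using I(1) by auto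
  ultimately have "card (insert n I) \<le> rk K (Suc n) (x(n := a))"
    by (intro card_le_rk)
  then show ?thesis
    using I(3) \<open>finite I\<close> \<open>n \<notin> I\<close> by simp
qed

lemma rk_fun_upd:
  assumes "finite K"
  shows "rk K (Suc n) (x(n := a)) =
    (if a \<in> span_over K {..<n} x then rk K n x else Suc (rk K n x))"
proof (cases "a \<in> span_over K {..<n} x")
  case True
  then show ?thesis
    using rk_fun_upd_le_rk_if_in_span[OF assms True] rk_le_rk_fun_upd[of K n x a] by simp
next
  case False
  moreover have "rk K (Suc n) (x(n := a)) \<le> Suc (rk K n x)"
    by (rule rk_le_Suc_rk) auto
  ultimately show ?thesis
    using Suc_rk_le_rk_fun_upd_if_notin_span[OF False] by simp
qed

end

lemma vec_space_0: "vec_space 0 = {\<lambda>_. 0}"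
  unfolding vec_space_def by auto

lemma zero_in_vec_space: "(\<lambda>_. 0) \<in> vec_space n"
  by (simp add: vec_space_def)

lemma diff_in_vec_space:
  fixes x y :: "nat \<Rightarrow> 'a::ab_group_add"
  shows "x \<in> vec_space n \<Longrightarrow> y \<in> vec_space n \<Longrightarrow> x - y \<in> vec_space n"
  unfolding vec_space_def by simp

lemma inj_on_fun_upd_vec_space: "inj_on (\<lambda>(x, a). x(n := a)) (vec_space n \<times> A)"
proof (rule inj_onI, clarify)
  fix x a x' a'
  assume "x \<in> vec_space n" "x' \<in> vec_space n" and upd: "x(n := a) = x'(n := a')"
  then have "x i = x' i" for i
  proof (cases "i = n")
    case False
    then show ?thesis using fun_cong[OF upd, of i] by simp
  qed (use \<open>x \<in> vec_space n\<close> \<open>x' \<in> vec_space n\<close> in \<open>simp add: vec_space_def\<close>)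
  then show "x = x' \<and> a = a'" using fun_cong[OF upd, of n] by auto
qed

lemma vec_space_Suc_filter:
  "{y \<in> vec_space (Suc n). P y} =
     (\<lambda>(x, a). x(n := a)) ` (SIGMA x:vec_space n. {a. P (x(n := a))})"
proof (intro equalityI subsetI)
  fix y assume y: "y \<in> {y \<in> vec_space (Suc n). P y}"
  then have "(y(n := 0), y n) \<in> (SIGMA x:vec_space n. {a. P (x(n := a))})"
    unfolding vec_space_def by auto
  then show "y \<in> (\<lambda>(x, a). x(n := a)) ` (SIGMA x:vec_space n. {a. P (x(n := a))})"
    by (rule rev_image_eqI) simp
qed (auto simp: vec_space_def)

lemma finite_vec_space: "finite (vec_space n :: (nat \<Rightarrow> 'a::{zero,finite}) set)"
proof (induction n)
  case (Suc n)
  have "{y :: nat \<Rightarrow> 'a. y \<in> vec_space (Suc n) \<and> True} =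
      (\<lambda>(x, a). x(n := a)) ` (SIGMA x:vec_space n. {a :: 'a. True})"
    by (rule vec_space_Suc_filter[where P = "\<lambda>_. True"])
  then show ?case using Suc by simp
qed (simp add: vec_space_0)

lemma card_vec_space_Suc_filter:
  "card {y \<in> vec_space (Suc n). P y} =
     (\<Sum>x\<in>vec_space n. card {a :: 'a::{zero,finite}. P (x(n := a))})"
proof -
  have "inj_on (\<lambda>(x, a). x(n := a)) (SIGMA x:vec_space n. {a :: 'a. P (x(n := a))})"
    by (rule inj_on_subset[OF inj_on_fun_upd_vec_space[of n UNIV]]) auto
  then show ?thesis
    by (simp add: vec_space_Suc_filter card_image finite_vec_space)
qed

lemma card_vec_space: "card (vec_space n :: (nat \<Rightarrow> 'a::{zero,finite}) set) = card (UNIV :: 'a set) ^ n"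
proof (induction n)
  case (Suc n)
  have "card {y :: nat \<Rightarrow> 'a. y \<in> vec_space (Suc n) \<and> True} =
      (\<Sum>x \<in> (vec_space n :: (nat \<Rightarrow> 'a) set). card {a :: 'a. True})"
    by (rule card_vec_space_Suc_filter[where P = "\<lambda>_. True"])
  then show ?case using Suc by simp
qed (simp add: vec_space_0)

definition rank_count :: "'a::field set \<Rightarrow> nat \<Rightarrow> nat \<Rightarrow> nat" where
  "rank_count K n u = card {x \<in> vec_space n. rk K n x = u}"

lemma rank_count_0: "rank_count K 0 u = (if u = 0 then 1 else 0)"
  using rk_le[of K 0] by (simp add: rank_count_def vec_space_0)

lemma sum_if_eq_mult_card:
  assumes "finite A"
  shows "(\<Sum>x\<in>A. if f x = u then g (f x) else 0) = g u * card {x \<in> A. f x = u}"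
proof -
  have "(\<Sum>x\<in>A. if f x = u then g (f x) else 0) = (\<Sum>x\<in>A. if f x = u then g u else 0)"
    by (rule sum.cong) simp_all
  also have "\<dots> = g u * card {x \<in> A. f x = u}"
    using assms by (simp add: sum.inter_filter[symmetric])
  finally show ?thesis .
qed

context
  fixes K :: "'a::{field,finite} set"
  assumes K: "is_subfield K"
begin

lemma card_rk_fun_upd:
  "card {a. rk K (Suc n) (x(n := a)) = u} =
     (if rk K n x = u then card K ^ u else 0) +
     (if Suc (rk K n x) = u then card (UNIV :: 'a set) - card K ^ rk K n x else 0)"
proof -
  let ?W = "span_over K {..<n} x"
  have rk_upd: "rk K (Suc n) (x(n := a)) = (if a \<in> ?W then rk K n x else Suc (rk K n x))" for a
    using rk_fun_upd[OF K finite] .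
  consider "rk K n x = u" | "Suc (rk K n x) = u" | "rk K n x \<noteq> u" "Suc (rk K n x) \<noteq> u"
    by blast
  then show ?thesis
  proof cases
    case 1
    then have "{a. rk K (Suc n) (x(n := a)) = u} = ?W" by (auto simp: rk_upd)
    then show ?thesis using 1 card_span_over_rk[OF K] by simp
  next
    case 2
    then have "{a. rk K (Suc n) (x(n := a)) = u} = UNIV - ?W" by (auto simp: rk_upd)
    then show ?thesis using 2 card_span_over_rk[OF K] by (simp add: card_Diff_subset)
  next
    case 3
    then have "{a. rk K (Suc n) (x(n := a)) = u} = {}" by (auto simp: rk_upd)
    then show ?thesis using 3 by simp
  qed
qed

lemma rank_count_Suc:
  "rank_count K (Suc n) u = card K ^ u * rank_count K n u +
     (case u of 0 \<Rightarrow> 0 | Suc u' \<Rightarrow> (card (UNIV :: 'a set) - card K ^ u') * rank_count K n u')"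
proof -
  have "rank_count K (Suc n) u = (\<Sum>x\<in>vec_space n. card {a. rk K (Suc n) (x(n := a)) = u})"
    unfolding rank_count_def by (rule card_vec_space_Suc_filter)
  also have "\<dots> = (\<Sum>x\<in>vec_space n. if rk K n x = u then card K ^ rk K n x else 0) +
      (\<Sum>x\<in>vec_space n. if Suc (rk K n x) = u then card (UNIV :: 'a set) - card K ^ rk K n x else 0)"
    by (simp add: card_rk_fun_upd sum.distrib cong: if_cong)
  also have "(\<Sum>x\<in>vec_space n. if rk K n x = u then card K ^ rk K n x else 0) =
      card K ^ u * rank_count K n u"
    unfolding rank_count_def by (rule sum_if_eq_mult_card[OF finite_vec_space])
  also have "(\<Sum>x\<in>vec_space n. if Suc (rk K n x) = u then card (UNIV :: 'a set) - card K ^ rk K n x else 0) =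
      (case u of 0 \<Rightarrow> 0 | Suc u' \<Rightarrow> (card (UNIV :: 'a set) - card K ^ u') * rank_count K n u')"
  proof (cases u)
    case (Suc u')
    then have "(\<Sum>x\<in>vec_space n. if Suc (rk K n x) = u then card (UNIV :: 'a set) - card K ^ rk K n x else 0) =
        (\<Sum>x\<in>vec_space n. if rk K n x = u' then card (UNIV :: 'a set) - card K ^ rk K n x else 0)"
      by simp
    also have "\<dots> = (card (UNIV :: 'a set) - card K ^ u') * rank_count K n u'"
      unfolding rank_count_def by (rule sum_if_eq_mult_card[OF finite_vec_space])
    finally show ?thesis using Suc by simp
  qed simp
  finally show ?thesis .
qed

end

fun q_binomial :: "nat \<Rightarrow> nat \<Rightarrow> nat \<Rightarrow> nat" where
  "q_binomial q 0 0 = 1"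
| "q_binomial q 0 (Suc u) = 0"
| "q_binomial q (Suc n) 0 = 1"
| "q_binomial q (Suc n) (Suc u) = q ^ Suc u * q_binomial q n (Suc u) + q_binomial q n u"

lemma q_binomial_0_right [simp]: "q_binomial q n 0 = 1"
  by (cases n) simp_all

lemma alpha_0 [simp]: "alpha q m 0 = 1"
  unfolding alpha_def by simp

lemma alpha_Suc: "alpha q m (Suc u) = alpha q m u * (q ^ m - q ^ u)"
  unfolding alpha_def by simp

lemma alpha_eq_0: "n < u \<Longrightarrow> alpha q n u = 0"
  unfolding alpha_def by (rule prod_zero) auto

lemma alpha_pos: "2 \<le> q \<Longrightarrow> u \<le> m \<Longrightarrow> 0 < alpha q m u"
  unfolding alpha_def by (rule prod_pos) (auto intro: power_strict_increasing)

lemma alpha_Suc_Suc: "alpha q (Suc n) (Suc u) = (q ^ Suc n - 1) * q ^ u * alpha q n u"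
proof -
  have "alpha q (Suc n) (Suc u) = (q ^ Suc n - q ^ 0) * (\<Prod>i<u. q ^ Suc n - q ^ Suc i)"
    unfolding alpha_def by (rule prod.lessThan_Suc_shift)
  also have "(\<Prod>i<u. q ^ Suc n - q ^ Suc i) = (\<Prod>i<u. q * (q ^ n - q ^ i))"
    by (rule prod.cong) (simp_all add: diff_mult_distrib2)
  also have "\<dots> = q ^ u * alpha q n u"
    unfolding alpha_def by (simp add: prod.distrib)
  finally show ?thesis by simp
qed

lemma q_pascal_identity:
  fixes q :: nat
  assumes "1 \<le> q" "u \<le> n"
  shows "q ^ Suc u * (q ^ n - q ^ u) + (q ^ Suc u - 1) * q ^ u = (q ^ Suc n - 1) * q ^ u"
proof -
  have "q ^ u \<le> q ^ n" "1 \<le> q ^ Suc u" "1 \<le> q ^ Suc n"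
    using assms by (simp_all add: power_increasing)
  then have "int (q ^ Suc u * (q ^ n - q ^ u) + (q ^ Suc u - 1) * q ^ u) =
      int ((q ^ Suc n - 1) * q ^ u)"
    by (simp add: of_nat_diff algebra_simps)
  then show ?thesis by (simp only: of_nat_eq_iff)
qed

lemma alpha_eq_q_binomial_mult: "1 \<le> q \<Longrightarrow> alpha q n u = q_binomial q n u * alpha q u u"
proof (induction n arbitrary: u)
  case 0
  then show ?case by (cases u) (simp_all add: alpha_eq_0)
next
  case (Suc n)
  show ?case
  proof (cases u)
    case (Suc u')
    have "q_binomial q (Suc n) (Suc u') * alpha q (Suc u') (Suc u') =
        q ^ Suc u' * (q_binomial q n (Suc u') * alpha q (Suc u') (Suc u')) +
        (q ^ Suc u' - 1) * q ^ u' * (q_binomial q n u' * alpha q u' u')"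
      by (simp add: alpha_Suc_Suc distrib_left distrib_right mult_ac)
    also have "\<dots> = q ^ Suc u' * alpha q n (Suc u') + (q ^ Suc u' - 1) * q ^ u' * alpha q n u'"
      using Suc.IH[OF Suc.prems] by simp
    also have "\<dots> = alpha q n u' * (q ^ Suc u' * (q ^ n - q ^ u') + (q ^ Suc u' - 1) * q ^ u')"
      by (simp add: alpha_Suc distrib_left distrib_right mult_ac)
    also have "\<dots> = alpha q (Suc n) (Suc u')"
    proof (cases "u' \<le> n")
      case True
      then show ?thesis using q_pascal_identity[OF Suc.prems True] by (simp add: alpha_Suc_Suc)
    next
      case False
      then show ?thesis by (simp add: alpha_eq_0 alpha_Suc_Suc)
    qed
    finally show ?thesis using Suc by simp
  qed simp
qed

lemma gauss_binom_eq_q_binomial: "2 \<le> q \<Longrightarrow> gauss_binom q n u = q_binomial q n u"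
  unfolding gauss_binom_def using alpha_eq_q_binomial_mult[of q n u] alpha_pos[of q u u] by simp

lemma V_pos: "0 < V q m n \<rho>"
proof -
  have "gauss_binom q n 0 * alpha q m 0 \<le> V q m n \<rho>"
    unfolding V_def by (rule member_le_sum) simp_all
  then show ?thesis by (simp add: gauss_binom_def)
qed

lemma last_zeroing_stage_eq_0:
  assumes "i < k" "x \<in> vec_space n"
  shows "(if i * n + j < k * n then 0 else x j) = 0"
proof (cases "j < n")
  case True
  have "i * n + j < Suc i * n" using True by simp
  also have "\<dots> \<le> k * n" using assms(1) by (intro mult_right_mono) simp_all
  finally show ?thesis by simp
qed (use assms(2) in \<open>simp add: vec_space_def\<close>)

context
  fixes K :: "'a::{field,finite} set"
begin

lemma cov_radius_le:
  assumes "\<And>x. x \<in> vec_space n \<Longrightarrow> \<exists>c\<in>C. rank_dist K n x c \<le> r" and "finite C"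
  shows "cov_radius K n C \<le> r"
  unfolding cov_radius_def
proof (rule Max.boundedI)
  show "(\<lambda>x. Min ((\<lambda>c. rank_dist K n x c) ` C)) ` vec_space n \<noteq> {}"
    using zero_in_vec_space by blast
  fix u assume "u \<in> (\<lambda>x. Min ((\<lambda>c. rank_dist K n x c) ` C)) ` vec_space n"
  then obtain x where "x \<in> vec_space n" and u: "u = Min ((\<lambda>c. rank_dist K n x c) ` C)"
    by blast
  then obtain c where "c \<in> C" "rank_dist K n x c \<le> r" using assms(1) by blast
  moreover have "u \<le> rank_dist K n x c"
    unfolding u using assms(2) \<open>c \<in> C\<close> by (intro Min_le) simp_all
  ultimately show "u \<le> r" by simp
qed (simp add: finite_vec_space)

lemma le_cov_radius:
  assumes "x \<in> vec_space n" and "\<And>c. c \<in> C \<Longrightarrow> r \<le> rank_dist K n x c"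
    and "finite C" "C \<noteq> {}"
  shows "r \<le> cov_radius K n C"
proof -
  have "r \<le> Min ((\<lambda>c. rank_dist K n x c) ` C)"
    using assms(2-4) by simp
  also have "\<dots> \<le> cov_radius K n C"
    unfolding cov_radius_def using assms(1) by (intro Max_ge imageI) (simp_all add: finite_vec_space)
  finally show ?thesis .
qed

lemma exists_rank_dist_le_cov_radius:
  assumes "x \<in> vec_space n" and "finite C" "C \<noteq> {}"
  shows "\<exists>c\<in>C. rank_dist K n x c \<le> cov_radius K n C"
proof -
  have "Min ((\<lambda>c. rank_dist K n x c) ` C) \<in> (\<lambda>c. rank_dist K n x c) ` C"
    using assms(2,3) by (intro Min_in) simp_all
  then obtain c where "c \<in> C" and c: "rank_dist K n x c = Min ((\<lambda>c. rank_dist K n x c) ` C)"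
    by (elim imageE) simp
  have "Min ((\<lambda>c. rank_dist K n x c) ` C) \<le> cov_radius K n C"
    unfolding cov_radius_def using assms(1) by (intro Max_ge imageI) (simp_all add: finite_vec_space)
  with c have "rank_dist K n x c \<le> cov_radius K n C" by (rule ord_eq_le_trans)
  with \<open>c \<in> C\<close> show ?thesis by blast
qed

lemma cov_radius_image_le_Suc:
  fixes k :: nat
  assumes "0 < k"
    and "\<And>x i. x \<in> vec_space n \<Longrightarrow> i < k \<Longrightarrow> rank_dist K n x (d i) \<le> Suc (rank_dist K n x (c i))"
  shows "cov_radius K n (d ` {..<k}) \<le> Suc (cov_radius K n (c ` {..<k}))"
proof (rule cov_radius_le)
  fix x :: "nat \<Rightarrow> 'a" assume "x \<in> vec_space n"
  moreover have "finite (c ` {..<k})" "c ` {..<k} \<noteq> {}" using assms(1) by (simp_all add: lessThan_empty_iff)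
  ultimately obtain y where "y \<in> c ` {..<k}" "rank_dist K n x y \<le> cov_radius K n (c ` {..<k})"
    using exists_rank_dist_le_cov_radius by blast
  moreover from this obtain i where "i < k" "y = c i" by blast
  ultimately show "\<exists>y\<in>d ` {..<k}. rank_dist K n x y \<le> Suc (cov_radius K n (c ` {..<k}))"
    using assms(2)[OF \<open>x \<in> vec_space n\<close> \<open>i < k\<close>] by (intro bexI[of _ "d i"]) simp_all
qed simp

lemma cov_radius_zero_code:
  assumes "x0 \<in> vec_space n" "rk K n x0 = n"
  shows "cov_radius K n {\<lambda>_. 0} = n"
proof (rule antisym)
  show "cov_radius K n {\<lambda>_. 0} \<le> n"
    by (intro cov_radius_le) (simp_all add: rank_dist_def rk_le)
  have "x0 - (\<lambda>_. 0) = x0" by (simp add: fun_eq_iff)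
  then show "n \<le> cov_radius K n {\<lambda>_. 0}"
    using assms by (intro le_cov_radius[of x0]) (simp_all add: rank_dist_def)
qed

context
  assumes K: "is_subfield K"
begin

lemma cov_radius_change_one_entry:
  fixes c d :: "nat \<Rightarrow> nat \<Rightarrow> 'a" and k :: nat
  assumes "0 < k"
    and agree: "\<And>i. \<exists>j. \<forall>l. l \<noteq> j \<longrightarrow> d i l = c i l"
  shows "\<bar>int (cov_radius K n (d ` {..<k})) - int (cov_radius K n (c ` {..<k}))\<bar> \<le> 1"
proof -
  have "rank_dist K n x (d i) \<le> Suc (rank_dist K n x (c i))"
    and "rank_dist K n x (c i) \<le> Suc (rank_dist K n x (d i))" for x i
  proof -
    obtain j where "\<forall>l. l \<noteq> j \<longrightarrow> d i l = c i l" using agree by blast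
    then have "(x - d i) l = (x - c i) l" if "l \<noteq> j" for l
      using that by simp
    then show "rank_dist K n x (d i) \<le> Suc (rank_dist K n x (c i))"
      and "rank_dist K n x (c i) \<le> Suc (rank_dist K n x (d i))"
      unfolding rank_dist_def by (intro rk_le_Suc_rk[OF K, of n j n]; force)+
  qed
  then have "cov_radius K n (d ` {..<k}) \<le> Suc (cov_radius K n (c ` {..<k}))"
    and "cov_radius K n (c ` {..<k}) \<le> Suc (cov_radius K n (d ` {..<k}))"
    using \<open>0 < k\<close> by (intro cov_radius_image_le_Suc; simp)+
  then show ?thesis by linarith
qed

lemma exists_code_with_cov_radius:
  fixes c :: "nat \<Rightarrow> nat \<Rightarrow> 'a" and k :: nat
  assumes x0: "x0 \<in> vec_space n" "rk K n x0 = n"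
    and "\<rho> \<le> n" and c: "\<And>i. i < k \<Longrightarrow> c i \<in> vec_space n"
    and covers: "\<And>x. x \<in> vec_space n \<Longrightarrow> \<exists>i<k. rank_dist K n x (c i) \<le> \<rho>"
  shows "\<exists>C. is_code n C \<and> cov_radius K n C = \<rho> \<and> card C \<le> k"
proof -
  have "0 < k" using covers[OF zero_in_vec_space] by auto
  \<comment> \<open>Stage s zeroes the first s entries of the concatenation of the words c 0, ..., c (k - 1).\<close>
  define d where "d s i j = (if i * n + j < s then 0 else c i j)" for s i j
  define R where "R s = cov_radius K n (d s ` {..<k})" for s
  have "\<exists>y\<in>c ` {..<k}. rank_dist K n x y \<le> \<rho>" if x: "x \<in> vec_space n" for x
  proof -
    obtain i where "i < k" "rank_dist K n x (c i) \<le> \<rho>" using covers[OF x] by blast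
    then show ?thesis by (intro bexI[of _ "c i"]) simp_all
  qed
  moreover have "d 0 = c" by (simp add: d_def fun_eq_iff)
  ultimately have "R 0 \<le> \<rho>"
    unfolding R_def by (intro cov_radius_le) simp_all
  have "d (k * n) i = (\<lambda>_. 0)" if "i < k" for i
    using last_zeroing_stage_eq_0[OF that c[OF that]] by (simp add: d_def fun_eq_iff)
  then have "d (k * n) ` {..<k} = {\<lambda>_. 0}" using \<open>0 < k\<close> by auto
  then have "\<rho> \<le> R (k * n)"
    unfolding R_def using cov_radius_zero_code[OF x0] \<open>\<rho> \<le> n\<close> by simp
  have "\<bar>int (R (Suc s)) - int (R s)\<bar> \<le> 1" for s
    unfolding R_def
  proof (rule cov_radius_change_one_entry[OF \<open>0 < k\<close>])
    show "\<exists>j. \<forall>l. l \<noteq> j \<longrightarrow> d (Suc s) i l = d s i l" for i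
      by (rule exI[of _ "s - i * n"]) (auto simp: d_def)
  qed
  then obtain s where "R s = \<rho>"
    using nat0_intermed_int_val[of "k * n" "\<lambda>s. int (R s)" "int \<rho>"]
      \<open>R 0 \<le> \<rho>\<close> \<open>\<rho> \<le> R (k * n)\<close> by auto
  moreover have "is_code n (d s ` {..<k})"
    unfolding is_code_def using c \<open>0 < k\<close> by (auto simp: d_def vec_space_def)
  moreover have "card (d s ` {..<k}) \<le> k"
    using card_image_le[of "{..<k}" "d s"] by simp
  ultimately show ?thesis unfolding R_def by blast
qed

end

end

lemma exists_covering_tuple:
  fixes S :: "'b set" and B :: "'b \<Rightarrow> 'b set"
  assumes "finite S" and "\<And>x. x \<in> S \<Longrightarrow> B x \<subseteq> S" and "\<And>x. x \<in> S \<Longrightarrow> v \<le> card (B x)"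
    and "card S * (card S - v) ^ k < card S ^ k"
  shows "\<exists>t \<in> {..<k} \<rightarrow>\<^sub>E S. \<forall>x\<in>S. \<exists>i<k. t i \<in> B x"
proof (rule ccontr)
  assume uncovered: "\<not> ?thesis"
  have "{..<k} \<rightarrow>\<^sub>E S \<subseteq> (\<Union>x\<in>S. {..<k} \<rightarrow>\<^sub>E (S - B x))"
  proof
    fix t assume t: "t \<in> {..<k} \<rightarrow>\<^sub>E S"
    then obtain x where "x \<in> S" "\<forall>i<k. t i \<notin> B x" using uncovered by blast
    then have "t \<in> {..<k} \<rightarrow>\<^sub>E (S - B x)" using t by (auto simp: PiE_iff)
    then show "t \<in> (\<Union>x\<in>S. {..<k} \<rightarrow>\<^sub>E (S - B x))" using \<open>x \<in> S\<close> by blast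
  qed
  then have "card ({..<k} \<rightarrow>\<^sub>E S) \<le> card (\<Union>x\<in>S. {..<k} \<rightarrow>\<^sub>E (S - B x))"
    by (rule card_mono[rotated]) (use assms(1) in \<open>intro finite_UN_I finite_PiE, auto\<close>)
  also have "\<dots> \<le> (\<Sum>x\<in>S. card ({..<k} \<rightarrow>\<^sub>E (S - B x)))"
    by (rule card_UN_le[OF assms(1)])
  also have "\<dots> \<le> (\<Sum>x\<in>S. (card S - v) ^ k)"
  proof (rule sum_mono)
    fix x assume "x \<in> S"
    then have "card (S - B x) = card S - card (B x)"
      using assms(1) assms(2)[OF \<open>x \<in> S\<close>] by (simp add: card_Diff_subset finite_subset)
    then have "card (S - B x) \<le> card S - v" using assms(3)[OF \<open>x \<in> S\<close>] by simp
    then show "card ({..<k} \<rightarrow>\<^sub>E (S - B x)) \<le> (card S - v) ^ k"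
      by (simp add: card_PiE power_mono)
  qed
  finally show False using assms(4) by (simp add: card_PiE)
qed

lemma power_less_power_of_log_bound:
  fixes N D :: real
  assumes "1 < N" "0 < D" "D < N" and k: "1 / (1 - log N D) < real k"
  shows "N * D ^ k < N ^ k"
proof -
  have "0 < 1 - log N D" using assms(1-3) by (simp add: log_less_one_cancel_iff)
  then have "1 < real k * (1 - log N D)" using k by (simp add: field_simps)
  then have "log N (N * D ^ k) < log N (N ^ k)"
    using assms(1,2) by (simp add: log_mult log_nat_power algebra_simps)
  moreover have "0 < N * D ^ k" "0 < N ^ k" using assms(1,2) by simp_all
  ultimately show ?thesis using assms(1) by (simp only: log_less_cancel_iff)
qed

lemma power_less_power_at_floor_log_bound:
  fixes N V :: nat
  assumes "0 < V" "V < N"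
  defines "L \<equiv> 1 / (1 - log (real N) (real N - real V))"
  shows "N * (N - V) ^ (nat \<lfloor>L\<rfloor> + 1) < N ^ (nat \<lfloor>L\<rfloor> + 1)"
    and "int (nat \<lfloor>L\<rfloor> + 1) = \<lfloor>L\<rfloor> + 1"
proof -
  have "log (real N) (real N - real V) < 1"
    using assms(1,2) by (subst log_less_one_cancel_iff) linarith+
  then have "0 < L" unfolding L_def by simp
  then show "int (nat \<lfloor>L\<rfloor> + 1) = \<lfloor>L\<rfloor> + 1" by linarith
  have "real N * (real N - real V) ^ (nat \<lfloor>L\<rfloor> + 1) < real N ^ (nat \<lfloor>L\<rfloor> + 1)"
    using assms(1,2) \<open>0 < L\<close> unfolding L_def
    by (intro power_less_power_of_log_bound) linarith+
  moreover have "real N - real V = real (N - V)"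
    using assms(2) by (simp add: of_nat_diff)
  ultimately have "real (N * (N - V) ^ (nat \<lfloor>L\<rfloor> + 1)) < real (N ^ (nat \<lfloor>L\<rfloor> + 1))"
    by (simp only: of_nat_mult of_nat_power)
  then show "N * (N - V) ^ (nat \<lfloor>L\<rfloor> + 1) < N ^ (nat \<lfloor>L\<rfloor> + 1)"
    by (simp only: of_nat_less_iff)
qed

context
  fixes K :: "'a::{field,finite} set" and q m :: nat
  assumes K: "is_subfield K" and card_K: "card K = q"
    and card_UNIV: "card (UNIV :: 'a set) = q ^ m"
begin

lemma two_le_q: "2 \<le> q"
  using subfield_card_ge_2[OF K finite] card_K by simp

lemma rank_count_eq_q_binomial: "rank_count K n u = q_binomial q n u * alpha q m u"
proof (induction n arbitrary: u)
  case 0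
  then show ?case by (cases u) (simp_all add: rank_count_0)
next
  case (Suc n)
  show ?case
  proof (cases u)
    case 0
    then show ?thesis using rank_count_Suc[OF K, of n 0] Suc.IH[of 0] by simp
  next
    case (Suc u')
    have "rank_count K (Suc n) (Suc u') =
        q ^ Suc u' * (q_binomial q n (Suc u') * alpha q m (Suc u')) +
        (q ^ m - q ^ u') * (q_binomial q n u' * alpha q m u')"
      using rank_count_Suc[OF K, of n "Suc u'"] Suc.IH card_K card_UNIV by simp
    also have "\<dots> = q_binomial q (Suc n) (Suc u') * alpha q m (Suc u')"
      by (simp add: alpha_Suc distrib_left distrib_right mult_ac)
    finally show ?thesis using Suc by simp
  qed
qed

lemma card_rank_ball: "card {x \<in> vec_space n. rk K n x \<le> \<rho>} = V q m n \<rho>"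
proof -
  have "card {x \<in> vec_space n. rk K n x \<le> \<rho>} =
      card (\<Union>u\<le>\<rho>. {x \<in> vec_space n. rk K n x = u})"
    by (rule arg_cong[where f = card]) auto
  also have "\<dots> = (\<Sum>u\<le>\<rho>. rank_count K n u)"
    unfolding rank_count_def by (rule card_UN_disjoint) (auto simp: finite_vec_space)
  also have "\<dots> = V q m n \<rho>"
    unfolding V_def rank_count_eq_q_binomial gauss_binom_eq_q_binomial[OF two_le_q] ..
  finally show ?thesis .
qed

lemma exists_full_rank:
  assumes "n \<le> m"
  shows "\<exists>x \<in> vec_space n. rk K n x = n"
proof -
  have "alpha q n n = q_binomial q n n * alpha q n n"
    using two_le_q by (intro alpha_eq_q_binomial_mult) simp
  then have "q_binomial q n n = 1" using alpha_pos[OF two_le_q, of n n] by simp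
  then have "rank_count K n n = alpha q m n" by (simp add: rank_count_eq_q_binomial)
  then have "{x \<in> vec_space n. rk K n x = n} \<noteq> {}"
    using alpha_pos[OF two_le_q assms] unfolding rank_count_def by (intro notI) simp
  then show ?thesis by (simp add: Bex_def)
qed

lemma card_vec_space_eq_power: "card (vec_space n :: (nat \<Rightarrow> 'a) set) = q ^ (m * n)"
  by (simp add: card_vec_space card_UNIV power_mult)

lemma card_rank_ball_around:
  assumes "x \<in> vec_space n"
  shows "card {c \<in> vec_space n. rank_dist K n x c \<le> \<rho>} = V q m n \<rho>"
proof -
  have diff_diff: "x - (x - y) = y" for y :: "nat \<Rightarrow> 'a" by (simp add: fun_eq_iff)
  have "{c \<in> vec_space n. rank_dist K n x c \<le> \<rho>} = (\<lambda>y. x - y) ` {y \<in> vec_space n. rk K n y \<le> \<rho>}"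
  proof (intro equalityI subsetI)
    fix c assume "c \<in> {c \<in> vec_space n. rank_dist K n x c \<le> \<rho>}"
    then have "c = x - (x - c)" "x - c \<in> {y \<in> vec_space n. rk K n y \<le> \<rho>}"
      using assms diff_in_vec_space by (auto simp: rank_dist_def diff_diff)
    then show "c \<in> (\<lambda>y. x - y) ` {y \<in> vec_space n. rk K n y \<le> \<rho>}" by (rule image_eqI)
  qed (use assms diff_in_vec_space in \<open>auto simp: rank_dist_def diff_diff\<close>)
  moreover have "inj (\<lambda>y. x - y)" by (rule inj_onI) (metis diff_diff)
  ultimately show ?thesis
    using card_rank_ball by (simp add: card_image inj_on_subset)
qed

lemma V_less_card_vec_space:
  assumes "\<rho> < n" "n \<le> m"
  shows "V q m n \<rho> < q ^ (m * n)"
proof -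
  obtain x where x: "x \<in> vec_space n" "rk K n x = n"
    using exists_full_rank[OF assms(2)] by blast
  moreover have "x \<notin> {y \<in> vec_space n. rk K n y \<le> \<rho>}" using x(2) assms(1) by simp
  ultimately have "{y \<in> vec_space n. rk K n y \<le> \<rho>} \<subset> vec_space n" by blast
  then have "card {y \<in> vec_space n. rk K n y \<le> \<rho>} < card (vec_space n :: (nat \<Rightarrow> 'a) set)"
    by (rule psubset_card_mono[OF finite_vec_space])
  then show ?thesis by (simp add: card_rank_ball card_vec_space_eq_power)
qed

lemma exists_covering_family:
  assumes "q ^ (m * n) * (q ^ (m * n) - V q m n \<rho>) ^ k < (q ^ (m * n)) ^ k"
  obtains c where "\<And>i. i < k \<Longrightarrow> c i \<in> vec_space n"
    and "\<And>x. x \<in> vec_space n \<Longrightarrow> \<exists>i<k. rank_dist K n x (c i) \<le> \<rho>"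
proof -
  let ?S = "vec_space n :: (nat \<Rightarrow> 'a) set"
  let ?B = "\<lambda>x. {c \<in> ?S. rank_dist K n x c \<le> \<rho>}"
  have "\<exists>t \<in> {..<k} \<rightarrow>\<^sub>E ?S. \<forall>x\<in>?S. \<exists>i<k. t i \<in> ?B x"
    using assms card_rank_ball_around
    by (intro exists_covering_tuple[where v = "V q m n \<rho>"])
       (simp_all add: finite_vec_space card_vec_space_eq_power)
  then obtain t where t: "t \<in> {..<k} \<rightarrow>\<^sub>E ?S" and t_covers: "\<forall>x\<in>?S. \<exists>i<k. t i \<in> ?B x"
    by blast
  show ?thesis
  proof (rule that[of t])
    show "t i \<in> ?S" if "i < k" for i using t that by (simp add: PiE_iff)
    show "\<exists>i<k. rank_dist K n x (t i) \<le> \<rho>" if "x \<in> ?S" for x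
      using bspec[OF t_covers that] by auto
  qed
qed

end

theorem proposition11:
  fixes K :: "'a::{field,finite} set" and q m n \<rho> :: nat
  assumes "is_subfield K" and "card K = q" and "card (UNIV :: 'a set) = q ^ m"
    and "n \<le> m" and "0 < \<rho>" and "\<rho> < n"
  shows "\<exists>C. is_code n C \<and> cov_radius K n C = \<rho> \<and>
           int (card C) \<le> \<lfloor>1 / (1 - log (real (q ^ (m * n))) (real (q ^ (m * n)) - real (V q m n \<rho>)))\<rfloor> + 1
         \<and> int (K_R K n \<rho>) \<le> \<lfloor>1 / (1 - log (real (q ^ (m * n))) (real (q ^ (m * n)) - real (V q m n \<rho>)))\<rfloor> + 1"
proof -
  let ?N = "q ^ (m * n)" and ?V = "V q m n \<rho>"
  let ?k = "nat \<lfloor>1 / (1 - log (real ?N) (real ?N - real ?V))\<rfloor> + 1"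
  have "0 < ?V" "?V < ?N"
    using V_pos V_less_card_vec_space[OF assms(1-3,6,4)] by simp_all
  note k = power_less_power_at_floor_log_bound[OF this]
  obtain c where c: "\<And>i. i < ?k \<Longrightarrow> c i \<in> vec_space n"
    and covers: "\<And>x. x \<in> vec_space n \<Longrightarrow> \<exists>i<?k. rank_dist K n x (c i) \<le> \<rho>"
    using exists_covering_family[OF assms(1-3) k(1)] by blast
  obtain x0 where x0: "x0 \<in> vec_space n" "rk K n x0 = n"
    using exists_full_rank[OF assms(1-4)] by blast
  have "\<rho> \<le> n" using assms(6) by simp
  then obtain C where C: "is_code n C" "cov_radius K n C = \<rho>" "card C \<le> ?k"
    using exists_code_with_cov_radius[OF assms(1) x0 _ c covers] by blast
  moreover have "K_R K n \<rho> \<le> card C"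
    unfolding K_R_def using C by (intro Least_le) blast
  ultimately show ?thesis
    using k(2) by (intro exI[of _ C]) linarith
qed

end
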